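(* Let $m,n\geq 0$ and let $L^2(\mathbb{R}^{m|n}):=L^2(\mathbb{R}^m)\otimes\bigwedge\mathbb{R}^n$. Elements are written $f(x,\xi)=\sum_I f_I(x)\xi^I$ with $f_I\in L^2(\mathbb{R}^m)$, and $f$ has degree $|I|\bmod 2$ when $f=f_I\xi^I$. Equip this space with the inner product $$\langle f_1,f_2\rangle=\int_{\mathbb{R}^{m|n}}dx\,d\xi\ \overline{f_1(x,\xi)}\,f_2(x,\xi),$$ where $\overline{f(x,\xi)}:=\sum_I\overline{f_I(x)}\xi^I$. Then $L^2(\mathbb{R}^{m|n})$ is a Hilbert superspace of parity $n \bmod 2$. A fundamental symmetry is given by $$J(f)(x,\xi)=\sum_I \epsilon(I,\complement I)\,f_I(x)\,\xi^{\complement I},$$ where $\complement I$ is the complement of $I$ in $\{1,\dots,n\}$.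
   Context: Let $\xi^1,\dots,\xi^n$ be the canonical basis of $\mathbb{R}^n$ viewed as generators of $\bigwedge\mathbb{R}^n$. For an ordered subset $I=\{i_1<\dots<i_k\}\subseteq\{1,\dots,n\}$ set $\xi^I=\xi^{i_1}\cdots\xi^{i_k}$, with $\xi^\emptyset=1$. For subsets $I,J$, $\epsilon(I,J)$ is $0$ if $I\cap J\neq\emptyset$. Otherwise it is the sign of the permutation putting the list $(i_1,\dots,i_k,j_1,\dots,j_\ell)$ in increasing order. Hence $\xi^I\xi^J=\epsilon(I,J)\xi^{I\cup J}$. The Berezin integral of $f=\sum_I f_I(x)\xi^I$ is $\int_{\mathbb{R}^{m|n}}dx\,d\xi\,f:=\int_{\mathbb{R}^m}f_{\{1,\dots,n\}}(x)\,dx$. A Hilbert superspace of parity $n\in\mathbb{Z}_2$ is a complex $\mathbb{Z}_2$-graded vector space $\mathcal{H}$ with a superhermitian inner product $\langle-,-\rangle$, meaning $\overline{\langle x,y\rangle}=(-1)^{|x||y|}\langle y,x\rangle$. The inner product is sesquilinear and homogeneous of degree $n$. There must exist a fundamental symmetry, i.e. an endomorphism $J$ homogeneous of degree $n$ such that, for all homogeneous $x,y$: - $J^2(x)=(-1)^{(n+1)|x|}x$; - $\langle J x,Jy\rangle=\langle x,y\rangle$; - $(x,y)_J:=\langle x,J(y)\rangle$ is a hermitian positive definite scalar product for which $\mathcal{H}$ is complete. *)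

theory Defs
  imports "HOL-Analysis.Analysis" "HOL-Probability.Probability"
begin

definition cvs :: "'v set \<Rightarrow> 'v \<Rightarrow> ('v \<Rightarrow> 'v \<Rightarrow> 'v) \<Rightarrow> (complex \<Rightarrow> 'v \<Rightarrow> 'v) \<Rightarrow> bool" where
  "cvs V z add sm \<longleftrightarrow>
     z \<in> V \<and> (\<forall>x\<in>V. \<forall>y\<in>V. add x y \<in> V) \<and> (\<forall>c. \<forall>x\<in>V. sm c x \<in> V) \<and>
     (\<forall>x\<in>V. \<forall>y\<in>V. \<forall>w\<in>V. add (add x y) w = add x (add y w)) \<and>
     (\<forall>x\<in>V. \<forall>y\<in>V. add x y = add y x) \<and>
     (\<forall>x\<in>V. add z x = x) \<and>
     (\<forall>x\<in>V. add x (sm (-1) x) = z) \<and>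
     (\<forall>c. \<forall>x\<in>V. \<forall>y\<in>V. sm c (add x y) = add (sm c x) (sm c y)) \<and>
     (\<forall>a b. \<forall>x\<in>V. sm (a + b) x = add (sm a x) (sm b x)) \<and>
     (\<forall>a b. \<forall>x\<in>V. sm a (sm b x) = sm (a * b) x) \<and>
     (\<forall>x\<in>V. sm 1 x = x)"

definition subspace_of :: "'v set \<Rightarrow> 'v set \<Rightarrow> 'v \<Rightarrow> ('v \<Rightarrow> 'v \<Rightarrow> 'v) \<Rightarrow> (complex \<Rightarrow> 'v \<Rightarrow> 'v) \<Rightarrow> bool" where
  "subspace_of W V z add sm \<longleftrightarrow> W \<subseteq> V \<and> z \<in> W \<and>
     (\<forall>x\<in>W. \<forall>y\<in>W. add x y \<in> W) \<and> (\<forall>c. \<forall>x\<in>W. sm c x \<in> W)"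

definition graded_cvs :: "'v set \<Rightarrow> 'v set \<Rightarrow> 'v set \<Rightarrow> 'v \<Rightarrow> ('v \<Rightarrow> 'v \<Rightarrow> 'v) \<Rightarrow> (complex \<Rightarrow> 'v \<Rightarrow> 'v) \<Rightarrow> bool" where
  "graded_cvs V V0 V1 z add sm \<longleftrightarrow> cvs V z add sm \<and>
     subspace_of V0 V z add sm \<and> subspace_of V1 V z add sm \<and> V0 \<inter> V1 = {z} \<and>
     (\<forall>x\<in>V. \<exists>a\<in>V0. \<exists>b\<in>V1. x = add a b)"

text \<open>Degree of a homogeneous element (the zero vector is given degree 0).\<close>
definition deg :: "'v set \<Rightarrow> 'v \<Rightarrow> nat" where
  "deg V0 x = (if x \<in> V0 then 0 else 1)"

definition hpart :: "'v set \<Rightarrow> 'v set \<Rightarrow> nat \<Rightarrow> 'v set" where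
  "hpart V0 V1 d = (if even d then V0 else V1)"

definition sesquilinear :: "'v set \<Rightarrow> ('v \<Rightarrow> 'v \<Rightarrow> 'v) \<Rightarrow> (complex \<Rightarrow> 'v \<Rightarrow> 'v) \<Rightarrow> ('v \<Rightarrow> 'v \<Rightarrow> complex) \<Rightarrow> bool" where
  "sesquilinear V add sm ip \<longleftrightarrow>
     (\<forall>x\<in>V. \<forall>y\<in>V. \<forall>w\<in>V. ip (add x y) w = ip x w + ip y w) \<and>
     (\<forall>x\<in>V. \<forall>y\<in>V. \<forall>w\<in>V. ip w (add x y) = ip w x + ip w y) \<and>
     (\<forall>c. \<forall>x\<in>V. \<forall>y\<in>V. ip (sm c x) y = cnj c * ip x y) \<and>
     (\<forall>c. \<forall>x\<in>V. \<forall>y\<in>V. ip x (sm c y) = c * ip x y)"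

definition fundamental_symmetry ::
  "'v set \<Rightarrow> 'v set \<Rightarrow> 'v set \<Rightarrow> 'v \<Rightarrow> ('v \<Rightarrow> 'v \<Rightarrow> 'v) \<Rightarrow> (complex \<Rightarrow> 'v \<Rightarrow> 'v)
    \<Rightarrow> ('v \<Rightarrow> 'v \<Rightarrow> complex) \<Rightarrow> nat \<Rightarrow> ('v \<Rightarrow> 'v) \<Rightarrow> bool" where
  "fundamental_symmetry V V0 V1 z add sm ip p J \<longleftrightarrow>
     \<comment> \<open>J is an endomorphism (complex linear map V \<rightarrow> V)\<close>
     (\<forall>x\<in>V. J x \<in> V) \<and>
     (\<forall>x\<in>V. \<forall>y\<in>V. J (add x y) = add (J x) (J y)) \<and>
     (\<forall>c. \<forall>x\<in>V. J (sm c x) = sm c (J x)) \<and>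
     \<comment> \<open>homogeneous of degree p\<close>
     (\<forall>d. \<forall>x\<in>hpart V0 V1 d. J x \<in> hpart V0 V1 (d + p)) \<and>
     \<comment> \<open>the three axioms\<close>
     (\<forall>x\<in>V0 \<union> V1. J (J x) = sm ((-1) ^ ((p + 1) * deg V0 x)) x) \<and>
     (\<forall>x\<in>V0 \<union> V1. \<forall>y\<in>V0 \<union> V1. ip (J x) (J y) = ip x y) \<and>
     \<comment> \<open>(x,y)_J := ip x (J y) is a hermitian positive definite scalar product ...\<close>
     (\<forall>x\<in>V. \<forall>y\<in>V. cnj (ip x (J y)) = ip y (J x)) \<and>
     (\<forall>x\<in>V. Im (ip x (J x)) = 0 \<and> Re (ip x (J x)) \<ge> 0 \<and> (ip x (J x) = 0 \<longrightarrow> x = z)) \<and>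
     \<comment> \<open>... for which V is complete\<close>
     (\<forall>s :: nat \<Rightarrow> 'v. (\<forall>k. s k \<in> V) \<and>
        (\<forall>e>0. \<exists>N. \<forall>i j. i \<ge> N \<longrightarrow> j \<ge> N \<longrightarrow>
            sqrt (Re (ip (add (s i) (sm (-1) (s j))) (J (add (s i) (sm (-1) (s j)))))) < e)
        \<longrightarrow> (\<exists>l\<in>V. (\<lambda>k. sqrt (Re (ip (add (s k) (sm (-1) l)) (J (add (s k) (sm (-1) l))))))
                      \<longlonglongrightarrow> 0))"

definition hilbert_superspace ::
  "'v set \<Rightarrow> 'v set \<Rightarrow> 'v set \<Rightarrow> 'v \<Rightarrow> ('v \<Rightarrow> 'v \<Rightarrow> 'v) \<Rightarrow> (complex \<Rightarrow> 'v \<Rightarrow> 'v)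
    \<Rightarrow> ('v \<Rightarrow> 'v \<Rightarrow> complex) \<Rightarrow> nat \<Rightarrow> bool" where
  "hilbert_superspace V V0 V1 z add sm ip p \<longleftrightarrow>
     graded_cvs V V0 V1 z add sm \<and> sesquilinear V add sm ip \<and>
     \<comment> \<open>homogeneous of degree p\<close>
     (\<forall>x\<in>V0 \<union> V1. \<forall>y\<in>V0 \<union> V1. ip x y \<noteq> 0 \<longrightarrow> (deg V0 x + deg V0 y) mod 2 = p mod 2) \<and>
     \<comment> \<open>superhermitian\<close>
     (\<forall>x\<in>V0 \<union> V1. \<forall>y\<in>V0 \<union> V1. cnj (ip x y) = (-1) ^ (deg V0 x * deg V0 y) * ip y x) \<and>
     (\<exists>J. fundamental_symmetry V V0 V1 z add sm ip p J)"

text \<open>epsilon(I,J): 0 if I, J intersect; otherwise the sign of the permutation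
 sorting (i_1..i_k, j_1..j_l), i.e. (-1)^(number of inversions (i,j), i in I, j in J, j < i).\<close>
definition eps :: "nat set \<Rightarrow> nat set \<Rightarrow> int" where
  "eps I K = (if I \<inter> K \<noteq> {} then 0 else (-1) ^ card {(i, j). i \<in> I \<and> j \<in> K \<and> j < i})"

text \<open>Superfunctions on R^{m|n} as coefficient families f = sum_I f_I(x) xi^I,
 indexed by subsets I of {1..n}. Points of R^m are functions nat => real on {..<m}.\<close>
type_synonym superfun = "nat set \<Rightarrow> (nat \<Rightarrow> real) \<Rightarrow> complex"

definition gmult :: "nat \<Rightarrow> superfun \<Rightarrow> superfun \<Rightarrow> superfun" where
  "gmult n f g = (\<lambda>K x. \<Sum>I\<in>Pow {1..n}. \<Sum>I'\<in>Pow {1..n}.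
      if I \<union> I' = K then of_int (eps I I') * f I x * g I' x else 0)"

definition sconj :: "superfun \<Rightarrow> superfun" where
  "sconj f = (\<lambda>I x. cnj (f I x))"

text \<open>Lebesgue (Borel) measure on R^m, m \<ge> 0 (for m = 0 a one-point probability space).\<close>
definition Rm :: "nat \<Rightarrow> (nat \<Rightarrow> real) measure" where
  "Rm m = PiM {..<m} (\<lambda>_. lborel)"

definition berezin :: "nat \<Rightarrow> nat \<Rightarrow> superfun \<Rightarrow> complex" where
  "berezin m n f = (\<integral>x. f {1..n} x \<partial>Rm m)"

definition sqint :: "nat \<Rightarrow> ((nat \<Rightarrow> real) \<Rightarrow> complex) \<Rightarrow> bool" where
  "sqint m f \<longleftrightarrow> f \<in> borel_measurable (Rm m) \<and> integrable (Rm m) (\<lambda>x. (cmod (f x))\<^sup>2)"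

definition L2cls :: "nat \<Rightarrow> ((nat \<Rightarrow> real) \<Rightarrow> complex) \<Rightarrow> ((nat \<Rightarrow> real) \<Rightarrow> complex) set" where
  "L2cls m f = {g. sqint m g \<and> (AE x in Rm m. g x = f x)}"

definition L2 :: "nat \<Rightarrow> ((nat \<Rightarrow> real) \<Rightarrow> complex) set set" where
  "L2 m = {L2cls m f | f. sqint m f}"

definition rep :: "((nat \<Rightarrow> real) \<Rightarrow> complex) set \<Rightarrow> (nat \<Rightarrow> real) \<Rightarrow> complex" where
  "rep A = (SOME f. f \<in> A)"

type_synonym L2super = "nat set \<Rightarrow> ((nat \<Rightarrow> real) \<Rightarrow> complex) set"

definition L2zero :: "nat \<Rightarrow> L2super" where
  "L2zero m = (\<lambda>I. L2cls m (\<lambda>_. 0))"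

text \<open>L^2(R^{m|n}) = L^2(R^m) (x) \<Lambda>R^n: families (F_I) with F_I in L^2(R^m) for I \<subseteq> {1..n}.\<close>
definition L2s :: "nat \<Rightarrow> nat \<Rightarrow> L2super set" where
  "L2s m n = {F. (\<forall>I. I \<subseteq> {1..n} \<longrightarrow> F I \<in> L2 m) \<and> (\<forall>I. \<not> I \<subseteq> {1..n} \<longrightarrow> F I = L2zero m I)}"

definition L2even :: "nat \<Rightarrow> nat \<Rightarrow> L2super set" where
  "L2even m n = {F \<in> L2s m n. \<forall>I. odd (card I) \<longrightarrow> F I = L2zero m I}"

definition L2odd :: "nat \<Rightarrow> nat \<Rightarrow> L2super set" where
  "L2odd m n = {F \<in> L2s m n. \<forall>I. even (card I) \<longrightarrow> F I = L2zero m I}"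

definition L2add :: "nat \<Rightarrow> L2super \<Rightarrow> L2super \<Rightarrow> L2super" where
  "L2add m F G = (\<lambda>I. L2cls m (\<lambda>x. rep (F I) x + rep (G I) x))"

definition L2smul :: "nat \<Rightarrow> complex \<Rightarrow> L2super \<Rightarrow> L2super" where
  "L2smul m c F = (\<lambda>I. L2cls m (\<lambda>x. c * rep (F I) x))"

definition L2ip :: "nat \<Rightarrow> nat \<Rightarrow> L2super \<Rightarrow> L2super \<Rightarrow> complex" where
  "L2ip m n F G = berezin m n (gmult n (sconj (\<lambda>I. rep (F I))) (\<lambda>I. rep (G I)))"

text \<open>J(f) = sum_I eps(I, \<complement>I) f_I xi^{\<complement>I}; its coefficient at K is eps(\<complement>K, K) f_{\<complement>K}.\<close>
definition L2J :: "nat \<Rightarrow> nat \<Rightarrow> L2super \<Rightarrow> L2super" where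
  "L2J m n F = (\<lambda>K. if K \<subseteq> {1..n}
      then L2cls m (\<lambda>x. of_int (eps ({1..n} - K) K) * rep (F ({1..n} - K)) x)
      else L2zero m K)"

end

theory Submission
  imports Defs
begin

text \<open>The Berezin integral of \<open>cnj F * G\<close> keeps only the top coefficient, so
  \<open>\<langle>F, G\<rangle> = \<Sum>\<^sub>I \<epsilon>(I,\<complement>I) \<langle>F\<^sub>I, G\<^sub>\<complement>\<^sub>I\<rangle>\<close>. The coefficient \<open>I\<close> thus only pairs with \<open>\<complement>I\<close>, which
  gives parity \<open>n\<close>, and exchanging the factors costs \<open>\<epsilon>(I,\<complement>I) = (-1)^(|I| |\<complement>I|) \<epsilon>(\<complement>I,I)\<close>,
  which gives superhermiticity. Since \<open>\<epsilon>(I,\<complement>I)\<^sup>2 = 1\<close>, the form \<open>\<langle>F, J G\<rangle>\<close> is the standard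
  inner product \<open>\<Sum>\<^sub>I \<langle>F\<^sub>I, G\<^sub>I\<rangle>\<close> on \<open>2\<^sup>n\<close> copies of \<open>L\<^sup>2(\<real>\<^sup>m)\<close>, so positivity and completeness
  reduce to the Riesz--Fischer theorem, proved via a rapidly Cauchy subsequence that converges
  almost everywhere and Fatou's lemma. Finally \<open>J\<^sup>2\<close> multiplies the coefficient \<open>K\<close> by
  \<open>\<epsilon>(\<complement>K,K) \<epsilon>(K,\<complement>K) = (-1)^(|K| (n - |K|))\<close>, which is \<open>(-1)^((n+1) deg F)\<close> on homogeneous \<open>F\<close>.\<close>

section \<open>Square-integrable functions\<close>

lemma borel_measurable_cnj [measurable (raw)]:
  "f \<in> borel_measurable M \<Longrightarrow> (\<lambda>x. cnj (f x)) \<in> borel_measurable M"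
  by (rule borel_measurable_continuous_on[OF continuous_on_cnj[OF continuous_on_id]])

definition L2inner :: "nat \<Rightarrow> ((nat \<Rightarrow> real) \<Rightarrow> complex) \<Rightarrow> ((nat \<Rightarrow> real) \<Rightarrow> complex) \<Rightarrow> complex"
  where "L2inner m f g = (\<integral>x. cnj (f x) * g x \<partial>Rm m)"

definition L2sqnorm :: "nat \<Rightarrow> ((nat \<Rightarrow> real) \<Rightarrow> complex) \<Rightarrow> real"
  where "L2sqnorm m f = (\<integral>x. (cmod (f x))\<^sup>2 \<partial>Rm m)"

lemma sqint_zero: "sqint m (\<lambda>_. 0)"
  by (simp add: sqint_def)

lemma sqint_add:
  assumes "sqint m f" "sqint m g"
  shows "sqint m (\<lambda>x. f x + g x)"
proof -
  have [measurable]: "f \<in> borel_measurable (Rm m)" "g \<in> borel_measurable (Rm m)"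
    using assms by (auto simp: sqint_def)
  have bound: "integrable (Rm m) (\<lambda>x. 2 * (cmod (f x))\<^sup>2 + 2 * (cmod (g x))\<^sup>2)"
    using assms by (auto simp: sqint_def)
  have "(cmod (f x + g x))\<^sup>2 \<le> 2 * (cmod (f x))\<^sup>2 + 2 * (cmod (g x))\<^sup>2" for x
  proof -
    have "(cmod (f x + g x))\<^sup>2 \<le> (cmod (f x) + cmod (g x))\<^sup>2"
      by (simp add: power_mono norm_triangle_ineq)
    also have "\<dots> \<le> 2 * (cmod (f x))\<^sup>2 + 2 * (cmod (g x))\<^sup>2"
      using sum_squares_bound[of "cmod (f x)" "cmod (g x)"] by (simp add: power2_sum)
    finally show ?thesis .
  qed
  then have "integrable (Rm m) (\<lambda>x. (cmod (f x + g x))\<^sup>2)"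
    by (intro Bochner_Integration.integrable_bound[OF bound]) auto
  then show ?thesis
    by (simp add: sqint_def)
qed

lemma sqint_cmult:
  assumes "sqint m f"
  shows "sqint m (\<lambda>x. c * f x)"
proof -
  have [measurable]: "f \<in> borel_measurable (Rm m)"
    using assms by (simp add: sqint_def)
  have "integrable (Rm m) (\<lambda>x. (cmod c)\<^sup>2 * (cmod (f x))\<^sup>2)"
    using assms by (simp add: sqint_def)
  then show ?thesis
    by (simp add: sqint_def norm_mult power_mult_distrib)
qed

lemma sqint_diff: "sqint m f \<Longrightarrow> sqint m g \<Longrightarrow> sqint m (\<lambda>x. f x - g x)"
  using sqint_add[OF _ sqint_cmult, of m f g "-1"] by simp

lemma integrable_cnj_mult_sqint:
  assumes "sqint m f" "sqint m g"
  shows "integrable (Rm m) (\<lambda>x. cnj (f x) * g x)"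
proof -
  have [measurable]: "f \<in> borel_measurable (Rm m)" "g \<in> borel_measurable (Rm m)"
    using assms by (auto simp: sqint_def)
  have bound: "integrable (Rm m) (\<lambda>x. (cmod (f x))\<^sup>2 + (cmod (g x))\<^sup>2)"
    using assms by (auto simp: sqint_def)
  have "cmod (f x) * cmod (g x) \<le> (cmod (f x))\<^sup>2 + (cmod (g x))\<^sup>2" for x
    using sum_squares_bound[of "cmod (f x)" "cmod (g x)"]
      zero_le_power2[of "cmod (f x)"] zero_le_power2[of "cmod (g x)"] by linarith
  then show ?thesis
    by (intro Bochner_Integration.integrable_bound[OF bound]) (auto simp: norm_mult)
qed

lemma L2inner_cong:
  assumes "sqint m f" "sqint m f'" "sqint m g" "sqint m g'"
    and "AE x in Rm m. f x = f' x" "AE x in Rm m. g x = g' x"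
  shows "L2inner m f g = L2inner m f' g'"
proof -
  have [measurable]: "f \<in> borel_measurable (Rm m)" "f' \<in> borel_measurable (Rm m)"
    "g \<in> borel_measurable (Rm m)" "g' \<in> borel_measurable (Rm m)"
    using assms by (auto simp: sqint_def)
  from assms(5,6) show ?thesis
    unfolding L2inner_def by (intro integral_cong_AE) (auto elim: AE_mp)
qed

lemma L2inner_eq_0_left: "AE x in Rm m. f x = 0 \<Longrightarrow> L2inner m f g = 0"
  unfolding L2inner_def by (rule integral_eq_zero_AE) (auto elim: AE_mp)

lemma L2inner_eq_0_right: "AE x in Rm m. g x = 0 \<Longrightarrow> L2inner m f g = 0"
  unfolding L2inner_def by (rule integral_eq_zero_AE) (auto elim: AE_mp)

lemma L2inner_add_left:
  "sqint m f \<Longrightarrow> sqint m g \<Longrightarrow> sqint m h \<Longrightarrow>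
    L2inner m (\<lambda>x. f x + g x) h = L2inner m f h + L2inner m g h"
  unfolding L2inner_def
  using integrable_cnj_mult_sqint[of m f h] integrable_cnj_mult_sqint[of m g h]
  by (simp add: distrib_right)

lemma L2inner_add_right:
  "sqint m f \<Longrightarrow> sqint m g \<Longrightarrow> sqint m h \<Longrightarrow>
    L2inner m h (\<lambda>x. f x + g x) = L2inner m h f + L2inner m h g"
  unfolding L2inner_def
  using integrable_cnj_mult_sqint[of m h f] integrable_cnj_mult_sqint[of m h g]
  by (simp add: distrib_left)

lemma L2inner_cmult_left: "L2inner m (\<lambda>x. c * f x) g = cnj c * L2inner m f g"
  unfolding L2inner_def by (simp add: mult.assoc)

lemma L2inner_cmult_right: "L2inner m f (\<lambda>x. c * g x) = c * L2inner m f g"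
  unfolding L2inner_def by (simp add: algebra_simps)

lemma cnj_L2inner: "cnj (L2inner m f g) = L2inner m g f"
proof -
  have "cnj (L2inner m f g) = (\<integral>x. cnj (cnj (f x) * g x) \<partial>Rm m)"
    unfolding L2inner_def by (rule Bochner_Integration.integral_cnj[symmetric])
  then show ?thesis
    unfolding L2inner_def by (simp add: mult.commute)
qed

lemma L2inner_self: "L2inner m f f = of_real (L2sqnorm m f)"
proof -
  have "cnj (f x) * f x = complex_of_real ((cmod (f x))\<^sup>2)" for x
    by (simp only: complex_norm_square mult.commute)
  then show ?thesis
    unfolding L2inner_def L2sqnorm_def by (simp only: integral_complex_of_real)
qed

lemma L2sqnorm_nonneg: "0 \<le> L2sqnorm m f"
  unfolding L2sqnorm_def by (rule integral_nonneg_AE) auto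

lemma L2sqnorm_cong:
  "sqint m f \<Longrightarrow> sqint m g \<Longrightarrow> AE x in Rm m. f x = g x \<Longrightarrow> L2sqnorm m f = L2sqnorm m g"
  unfolding L2sqnorm_def by (rule integral_cong_AE) (auto simp: sqint_def elim: AE_mp)

lemma L2sqnorm_eq_0_iff: "sqint m f \<Longrightarrow> L2sqnorm m f = 0 \<longleftrightarrow> (AE x in Rm m. f x = 0)"
  unfolding L2sqnorm_def sqint_def by (subst integral_nonneg_eq_0_iff_AE) auto

lemma nn_integral_eq_L2sqnorm:
  "sqint m f \<Longrightarrow> (\<integral>\<^sup>+x. ennreal ((cmod (f x))\<^sup>2) \<partial>Rm m) = ennreal (L2sqnorm m f)"
  unfolding L2sqnorm_def sqint_def by (rule nn_integral_eq_integral) auto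

section \<open>The Riesz--Fischer theorem\<close>

lemma le_inverse_add_mult_square:
  fixes a c :: real
  assumes "0 \<le> a" "0 < c"
  shows "a \<le> 1 / c + c * a\<^sup>2"
proof (cases "a \<le> 1 / c")
  case True
  with assms show ?thesis
    by (simp add: add_increasing2)
next
  case False
  then have "1 \<le> c * a"
    using assms by (simp add: field_simps)
  then have "a \<le> c * a\<^sup>2"
    using assms by (simp add: power2_eq_square mult_le_cancel_right1 mult.assoc[symmetric])
  with assms show ?thesis
    by (simp add: add_increasing)
qed

lemma convergent_if_summable_scaled_square_diff:
  fixes h :: "nat \<Rightarrow> 'a::banach"
  assumes "summable (\<lambda>k. 2 ^ k * (norm (h (Suc k) - h k))\<^sup>2)"
  shows "convergent h"
proof -
  have "summable (\<lambda>k. (1/2) ^ k + 2 ^ k * (norm (h (Suc k) - h k))\<^sup>2)"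
    by (intro summable_add assms summable_geometric) simp
  then have "summable (\<lambda>k. norm (h (Suc k) - h k))"
    by (rule summable_comparison_test')
       (use le_inverse_add_mult_square[of _ "2 ^ _"] in \<open>simp add: power_one_over\<close>)
  then have "convergent (\<lambda>k. \<Sum>l<k. h (Suc l) - h l)"
    by (simp add: summable_norm_cancel flip: summable_iff_convergent)
  then have "convergent (\<lambda>k. h k - h 0)"
    by (simp add: sum_lessThan_telescope)
  then show ?thesis
    using convergent_add_const_iff[of "h 0" "\<lambda>k. h k - h 0"] by simp
qed

lemma Cauchy_obtain_fast_subseq:
  fixes D :: "nat \<Rightarrow> nat \<Rightarrow> real"
  assumes Cauchy: "\<And>e. e > 0 \<Longrightarrow> \<exists>N. \<forall>i j. i \<ge> N \<longrightarrow> j \<ge> N \<longrightarrow> D i j < e"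
    and "0 < r"
  obtains \<phi> where "\<And>k. D (\<phi> (Suc k)) (\<phi> k) < r ^ k" "\<And>k. k \<le> \<phi> k"
proof -
  obtain N where N: "\<And>k i j. i \<ge> N k \<Longrightarrow> j \<ge> N k \<Longrightarrow> D i j < r ^ k"
    using Cauchy[of "r ^ _"] \<open>0 < r\<close> by (metis zero_less_power)
  define \<phi> where "\<phi> k = k + (\<Sum>l\<le>k. N l)" for k
  have "N k \<le> \<phi> k" "N k \<le> \<phi> (Suc k)" for k
    using member_le_sum[of k "{..k}" N] member_le_sum[of k "{..Suc k}" N] by (auto simp: \<phi>_def)
  then show ?thesis
    using that[of \<phi>] N by (simp add: \<phi>_def)
qed

text \<open>The sequence converges a.e. because \<open>\<Sum>\<^sub>k 2^k |h (k+1) - h k|\<^sup>2\<close> has integral at most 2.\<close>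

lemma AE_convergent_if_L2sqnorm_diff_fast:
  assumes sq: "\<And>k. sqint m (h k)"
    and fast: "\<And>k. L2sqnorm m (\<lambda>x. h (Suc k) x - h k x) < (1/4) ^ k"
  shows "AE x in Rm m. convergent (\<lambda>k. h k x)"
proof -
  have [measurable]: "h k \<in> borel_measurable (Rm m)" for k
    using sq by (simp add: sqint_def)
  have term_bound: "(\<integral>\<^sup>+x. ennreal (2 ^ k * (cmod (h (Suc k) x - h k x))\<^sup>2) \<partial>Rm m) \<le> ennreal ((1/2) ^ k)"
    for k
  proof -
    have "2 ^ k * L2sqnorm m (\<lambda>x. h (Suc k) x - h k x) \<le> 2 ^ k * (1/4) ^ k"
      using fast[of k] by (intro mult_left_mono) auto
    also have "\<dots> = (1/2) ^ k"
      by (simp add: power_mult_distrib[symmetric])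
    finally have bound: "2 ^ k * L2sqnorm m (\<lambda>x. h (Suc k) x - h k x) \<le> (1/2) ^ k" .
    have "(\<integral>\<^sup>+x. ennreal (2 ^ k * (cmod (h (Suc k) x - h k x))\<^sup>2) \<partial>Rm m)
        = ennreal (2 ^ k) * (\<integral>\<^sup>+x. ennreal ((cmod (h (Suc k) x - h k x))\<^sup>2) \<partial>Rm m)"
      by (simp add: ennreal_mult nn_integral_cmult)
    also have "\<dots> = ennreal (2 ^ k * L2sqnorm m (\<lambda>x. h (Suc k) x - h k x))"
      by (simp add: nn_integral_eq_L2sqnorm[OF sqint_diff[OF sq sq]] ennreal_mult L2sqnorm_nonneg)
    also have "\<dots> \<le> ennreal ((1/2) ^ k)"
      using bound by (rule ennreal_leI)
    finally show ?thesis .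
  qed
  have "(\<integral>\<^sup>+x. (\<Sum>k. ennreal (2 ^ k * (cmod (h (Suc k) x - h k x))\<^sup>2)) \<partial>Rm m)
      = (\<Sum>k. \<integral>\<^sup>+x. ennreal (2 ^ k * (cmod (h (Suc k) x - h k x))\<^sup>2) \<partial>Rm m)"
    by (rule nn_integral_suminf) measurable
  also have "\<dots> \<le> (\<Sum>k. ennreal ((1/2) ^ k))"
    by (intro suminf_le term_bound summableI)
  also have "\<dots> = ennreal 2"
    by (subst suminf_ennreal2) (auto simp: suminf_geometric summable_geometric)
  finally have "AE x in Rm m. (\<Sum>k. ennreal (2 ^ k * (cmod (h (Suc k) x - h k x))\<^sup>2)) \<noteq> \<infinity>"
    by (intro nn_integral_PInf_AE) (auto simp: top_unique)
  then show ?thesis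
    by (rule AE_mp)
       (auto intro!: AE_I2 convergent_if_summable_scaled_square_diff summable_suminf_not_top)
qed

text \<open>Fatou's lemma for the \<open>L\<^sup>2\<close> distance to an a.e. limit.\<close>

lemma L2sqnorm_diff_AE_limit_le:
  assumes "sqint m g" "\<And>k. sqint m (h k)" "f \<in> borel_measurable (Rm m)"
    and lim: "AE x in Rm m. (\<lambda>k. h k x) \<longlonglongrightarrow> f x"
    and close: "eventually (\<lambda>k. L2sqnorm m (\<lambda>x. g x - h k x) \<le> e) sequentially"
  shows "sqint m (\<lambda>x. g x - f x) \<and> L2sqnorm m (\<lambda>x. g x - f x) \<le> e"
proof -
  have [measurable]: "g \<in> borel_measurable (Rm m)" "h k \<in> borel_measurable (Rm m)"
    "f \<in> borel_measurable (Rm m)" for k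
    using assms by (auto simp: sqint_def)
  have "AE x in Rm m. liminf (\<lambda>k. ennreal ((cmod (g x - h k x))\<^sup>2))
      = ennreal ((cmod (g x - f x))\<^sup>2)"
    using lim
  proof (rule AE_mp, intro AE_I2 impI)
    fix x
    assume "(\<lambda>k. h k x) \<longlonglongrightarrow> f x"
    then have "(\<lambda>k. ennreal ((cmod (g x - h k x))\<^sup>2)) \<longlonglongrightarrow> ennreal ((cmod (g x - f x))\<^sup>2)"
      by (intro tendsto_ennrealI tendsto_power tendsto_norm tendsto_diff tendsto_const)
    then show "liminf (\<lambda>k. ennreal ((cmod (g x - h k x))\<^sup>2)) = ennreal ((cmod (g x - f x))\<^sup>2)"
      by (intro lim_imp_Liminf) auto
  qed
  then have "(\<integral>\<^sup>+x. ennreal ((cmod (g x - f x))\<^sup>2) \<partial>Rm m)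
      = (\<integral>\<^sup>+x. liminf (\<lambda>k. ennreal ((cmod (g x - h k x))\<^sup>2)) \<partial>Rm m)"
    by (intro nn_integral_cong_AE) (auto elim: AE_mp)
  also have "\<dots> \<le> liminf (\<lambda>k. \<integral>\<^sup>+x. ennreal ((cmod (g x - h k x))\<^sup>2) \<partial>Rm m)"
    by (rule nn_integral_liminf) measurable
  also have "\<dots> \<le> limsup (\<lambda>k. \<integral>\<^sup>+x. ennreal ((cmod (g x - h k x))\<^sup>2) \<partial>Rm m)"
    by (rule Liminf_le_Limsup) simp
  also have "\<dots> \<le> ennreal e"
  proof (rule Limsup_bounded)
    show "eventually (\<lambda>k. (\<integral>\<^sup>+x. ennreal ((cmod (g x - h k x))\<^sup>2) \<partial>Rm m) \<le> ennreal e) sequentially"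
      using close by eventually_elim
        (simp add: nn_integral_eq_L2sqnorm[OF sqint_diff[OF assms(1,2)]] ennreal_leI)
  qed
  finally have le: "(\<integral>\<^sup>+x. ennreal ((cmod (g x - f x))\<^sup>2) \<partial>Rm m) \<le> ennreal e" .
  then have "integrable (Rm m) (\<lambda>x. (cmod (g x - f x))\<^sup>2)"
    by (intro integrableI_bounded) (simp_all add: le_less_trans)
  then have sq: "sqint m (\<lambda>x. g x - f x)"
    by (simp add: sqint_def)
  obtain k where "L2sqnorm m (\<lambda>x. g x - h k x) \<le> e"
    using close by (auto simp: eventually_sequentially)
  then have "0 \<le> e"
    using L2sqnorm_nonneg order.trans by blast
  with le sq show ?thesis
    by (simp add: nn_integral_eq_L2sqnorm)
qed

theorem L2_Riesz_Fischer:
  assumes sq: "\<And>k. sqint m (g k)"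
    and Cauchy: "\<And>e. e > 0 \<Longrightarrow> \<exists>N. \<forall>i j. i \<ge> N \<longrightarrow> j \<ge> N \<longrightarrow> L2sqnorm m (\<lambda>x. g i x - g j x) < e"
  obtains f where "sqint m f" "(\<lambda>k. L2sqnorm m (\<lambda>x. g k x - f x)) \<longlonglongrightarrow> 0"
proof -
  have [measurable]: "g k \<in> borel_measurable (Rm m)" for k
    using sq by (simp add: sqint_def)
  obtain \<phi> where fast: "\<And>k. L2sqnorm m (\<lambda>x. g (\<phi> (Suc k)) x - g (\<phi> k) x) < (1/4) ^ k"
    and \<phi>: "\<And>k. k \<le> \<phi> k"
    using Cauchy_obtain_fast_subseq[of _ "1/4", OF Cauchy] by (metis zero_less_divide_1_iff zero_less_numeral)
  define f where "f x = lim (\<lambda>k. g (\<phi> k) x)" for x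
  have [measurable]: "f \<in> borel_measurable (Rm m)"
    unfolding f_def by measurable
  have lim: "AE x in Rm m. (\<lambda>k. g (\<phi> k) x) \<longlonglongrightarrow> f x"
    using AE_convergent_if_L2sqnorm_diff_fast[OF sq fast]
    by (rule AE_mp) (auto simp: f_def convergent_LIMSEQ_iff)
  have close: "\<exists>N. \<forall>i\<ge>N. sqint m (\<lambda>x. g i x - f x) \<and> L2sqnorm m (\<lambda>x. g i x - f x) \<le> e"
    if "e > 0" for e
  proof -
    obtain N where N: "\<And>i j. i \<ge> N \<Longrightarrow> j \<ge> N \<Longrightarrow> L2sqnorm m (\<lambda>x. g i x - g j x) < e"
      using Cauchy[OF \<open>e > 0\<close>] by blast
    have "eventually (\<lambda>k. L2sqnorm m (\<lambda>x. g i x - g (\<phi> k) x) \<le> e) sequentially" if "i \<ge> N" for i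
      using N[OF that order.trans[OF _ \<phi>]] by (auto intro!: eventually_sequentiallyI less_imp_le)
    then show ?thesis
      using L2sqnorm_diff_AE_limit_le[OF sq sq _ lim] by auto
  qed
  then obtain N where "sqint m (\<lambda>x. g N x - f x)"
    using zero_less_one by blast
  then have "sqint m f"
    using sqint_diff[OF sq[of N]] by fastforce
  moreover have "(\<lambda>k. L2sqnorm m (\<lambda>x. g k x - f x)) \<longlonglongrightarrow> 0"
  proof (rule LIMSEQ_I)
    fix r :: real
    assume "0 < r"
    then obtain N where "\<forall>i\<ge>N. L2sqnorm m (\<lambda>x. g i x - f x) \<le> r / 2"
      using close[of "r / 2"] by auto
    then show "\<exists>N. \<forall>k\<ge>N. norm (L2sqnorm m (\<lambda>x. g k x - f x) - 0) < r"
      using \<open>0 < r\<close> L2sqnorm_nonneg by fastforce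
  qed
  ultimately show ?thesis
    using that by blast
qed

section \<open>The space of superfunctions\<close>

lemma L2cls_in_L2: "sqint m f \<Longrightarrow> L2cls m f \<in> L2 m"
  by (auto simp: L2_def)

lemma rep_in:
  assumes "A \<in> L2 m"
  shows "rep A \<in> A"
proof -
  obtain f where "A = L2cls m f" "sqint m f"
    using assms by (auto simp: L2_def)
  then have "f \<in> A"
    by (simp add: L2cls_def)
  then show ?thesis
    unfolding rep_def by (rule someI[where P = "\<lambda>f. f \<in> A"])
qed

lemma sqint_rep: "A \<in> L2 m \<Longrightarrow> sqint m (rep A)"
  using rep_in by (auto simp: L2_def L2cls_def)

lemma AE_rep_L2cls: "sqint m f \<Longrightarrow> AE x in Rm m. rep (L2cls m f) x = f x"
  using rep_in[OF L2cls_in_L2] by (simp add: L2cls_def)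

lemma L2cls_cong: "AE x in Rm m. f x = g x \<Longrightarrow> L2cls m f = L2cls m g"
  unfolding L2cls_def by (auto elim: AE_mp)

lemma L2cls_eqI:
  assumes "A \<in> L2 m" "AE x in Rm m. rep A x = f x"
  shows "L2cls m f = A"
proof -
  obtain g where A: "A = L2cls m g" "sqint m g"
    using assms(1) by (auto simp: L2_def)
  have "AE x in Rm m. f x = g x"
    using assms(2) AE_rep_L2cls[OF A(2)] unfolding A(1) by eventually_elim simp
  then show ?thesis
    using A(1) L2cls_cong by blast
qed

lemma L2zero_in_L2: "L2zero m I \<in> L2 m"
  by (simp add: L2zero_def L2cls_in_L2 sqint_zero)

lemma AE_rep_L2zero: "AE x in Rm m. rep (L2zero m I) x = 0"
  unfolding L2zero_def by (rule AE_rep_L2cls[OF sqint_zero])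

lemma L2s_coeff_in_L2: "F \<in> L2s m n \<Longrightarrow> F I \<in> L2 m"
  unfolding L2s_def using L2zero_in_L2 by (cases "I \<subseteq> {1..n}") auto

lemma sqint_rep_L2s: "F \<in> L2s m n \<Longrightarrow> sqint m (rep (F I))"
  by (rule sqint_rep[OF L2s_coeff_in_L2])

lemma L2s_eqI:
  assumes "F \<in> L2s m n" "G \<in> L2s m n"
    and "\<And>I. I \<subseteq> {1..n} \<Longrightarrow> AE x in Rm m. rep (F I) x = rep (G I) x"
  shows "F = G"
proof
  fix I
  show "F I = G I"
  proof (cases "I \<subseteq> {1..n}")
    case True
    have "F I = L2cls m (rep (F I))"
      by (rule L2cls_eqI[symmetric, OF L2s_coeff_in_L2[OF assms(1)]]) simp
    also have "\<dots> = G I"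
      by (rule L2cls_eqI[OF L2s_coeff_in_L2[OF assms(2)] assms(3)[OF True, THEN AE_mp]]) auto
    finally show ?thesis .
  next
    case False
    with assms(1,2) show ?thesis
      by (simp add: L2s_def)
  qed
qed

lemma L2s_coeff_eq_L2zeroI:
  "F \<in> L2s m n \<Longrightarrow> AE x in Rm m. rep (F I) x = 0 \<Longrightarrow> F I = L2zero m I"
  unfolding L2zero_def by (rule L2cls_eqI[symmetric, OF L2s_coeff_in_L2])

lemma L2zero_in_L2s: "L2zero m \<in> L2s m n"
  by (simp add: L2s_def L2zero_in_L2)

lemma L2add_eq_L2zero: "F I = L2zero m I \<Longrightarrow> G I = L2zero m I \<Longrightarrow> L2add m F G I = L2zero m I"
  unfolding L2add_def L2zero_def
  by (rule L2cls_cong) (use AE_rep_L2zero[of m I] in \<open>auto simp: L2zero_def elim: AE_mp\<close>)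

lemma L2smul_eq_L2zero: "F I = L2zero m I \<Longrightarrow> L2smul m c F I = L2zero m I"
  unfolding L2smul_def L2zero_def
  by (rule L2cls_cong) (use AE_rep_L2zero[of m I] in \<open>auto simp: L2zero_def elim: AE_mp\<close>)

lemma L2add_in_L2s:
  assumes "F \<in> L2s m n" "G \<in> L2s m n"
  shows "L2add m F G \<in> L2s m n"
proof -
  have "L2add m F G I \<in> L2 m" for I
    unfolding L2add_def by (intro L2cls_in_L2 sqint_add sqint_rep_L2s[OF assms(1)] sqint_rep_L2s[OF assms(2)])
  moreover have "L2add m F G I = L2zero m I" if "\<not> I \<subseteq> {1..n}" for I
    using assms that by (intro L2add_eq_L2zero) (auto simp: L2s_def)
  ultimately show ?thesis
    by (simp add: L2s_def)
qed

lemma L2smul_in_L2s: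
  assumes "F \<in> L2s m n"
  shows "L2smul m c F \<in> L2s m n"
proof -
  have "L2smul m c F I \<in> L2 m" for I
    unfolding L2smul_def by (intro L2cls_in_L2 sqint_cmult sqint_rep_L2s[OF assms])
  moreover have "L2smul m c F I = L2zero m I" if "\<not> I \<subseteq> {1..n}" for I
    using assms that by (intro L2smul_eq_L2zero) (auto simp: L2s_def)
  ultimately show ?thesis
    by (simp add: L2s_def)
qed

lemma AE_rep_L2add:
  "F \<in> L2s m n \<Longrightarrow> G \<in> L2s m n \<Longrightarrow>
    AE x in Rm m. rep (L2add m F G I) x = rep (F I) x + rep (G I) x"
  unfolding L2add_def by (intro AE_rep_L2cls sqint_add sqint_rep_L2s)

lemma AE_rep_L2smul:
  "F \<in> L2s m n \<Longrightarrow> AE x in Rm m. rep (L2smul m c F I) x = c * rep (F I) x"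
  unfolding L2smul_def by (intro AE_rep_L2cls sqint_cmult sqint_rep_L2s)

lemma L2add_assoc:
  assumes "F \<in> L2s m n" "G \<in> L2s m n" "H \<in> L2s m n"
  shows "L2add m (L2add m F G) H = L2add m F (L2add m G H)"
proof (rule L2s_eqI[of _ m n])
  fix I
  from AE_rep_L2add[OF L2add_in_L2s[OF assms(1,2)] assms(3), of I] AE_rep_L2add[OF assms(1,2), of I]
    AE_rep_L2add[OF assms(1) L2add_in_L2s[OF assms(2,3)], of I] AE_rep_L2add[OF assms(2,3), of I]
  show "AE x in Rm m. rep (L2add m (L2add m F G) H I) x = rep (L2add m F (L2add m G H) I) x"
    by eventually_elim simp
qed (use assms in \<open>simp_all add: L2add_in_L2s\<close>)

lemma L2add_commute: "L2add m F G = L2add m G F"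
  unfolding L2add_def by (simp add: add.commute)

lemma L2add_L2zero_left:
  assumes "F \<in> L2s m n"
  shows "L2add m (L2zero m) F = F"
proof (rule L2s_eqI[of _ m n])
  fix I
  from AE_rep_L2add[OF L2zero_in_L2s assms, of I] AE_rep_L2zero[of m I]
  show "AE x in Rm m. rep (L2add m (L2zero m) F I) x = rep (F I) x"
    by eventually_elim simp
qed (use assms in \<open>simp_all add: L2add_in_L2s L2zero_in_L2s\<close>)

lemma L2add_L2smul_minus_one:
  assumes "F \<in> L2s m n"
  shows "L2add m F (L2smul m (-1) F) = L2zero m"
proof (rule L2s_eqI[of _ m n])
  fix I
  from AE_rep_L2add[OF assms L2smul_in_L2s[OF assms, of "-1"], of I] AE_rep_L2smul[OF assms, of "-1" I]
    AE_rep_L2zero[of m I]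
  show "AE x in Rm m. rep (L2add m F (L2smul m (-1) F) I) x = rep (L2zero m I) x"
    by eventually_elim simp
qed (use assms in \<open>simp_all add: L2add_in_L2s L2smul_in_L2s L2zero_in_L2s\<close>)

lemma L2smul_L2add:
  assumes "F \<in> L2s m n" "G \<in> L2s m n"
  shows "L2smul m c (L2add m F G) = L2add m (L2smul m c F) (L2smul m c G)"
proof (rule L2s_eqI[of _ m n])
  fix I
  from AE_rep_L2add[OF assms, of I] AE_rep_L2smul[OF L2add_in_L2s[OF assms], of c I]
    AE_rep_L2smul[OF assms(1), of c I] AE_rep_L2smul[OF assms(2), of c I]
    AE_rep_L2add[OF L2smul_in_L2s[OF assms(1), of c] L2smul_in_L2s[OF assms(2), of c], of I]
  show "AE x in Rm m. rep (L2smul m c (L2add m F G) I) x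
      = rep (L2add m (L2smul m c F) (L2smul m c G) I) x"
    by eventually_elim (simp add: algebra_simps)
qed (use assms in \<open>simp_all add: L2add_in_L2s L2smul_in_L2s\<close>)

lemma L2smul_add:
  assumes "F \<in> L2s m n"
  shows "L2smul m (a + b) F = L2add m (L2smul m a F) (L2smul m b F)"
proof (rule L2s_eqI[of _ m n])
  fix I
  from AE_rep_L2smul[OF assms, of "a + b" I] AE_rep_L2smul[OF assms, of a I]
    AE_rep_L2smul[OF assms, of b I] AE_rep_L2add[OF L2smul_in_L2s[OF assms, of a] L2smul_in_L2s[OF assms, of b], of I]
  show "AE x in Rm m. rep (L2smul m (a + b) F I) x = rep (L2add m (L2smul m a F) (L2smul m b F) I) x"
    by eventually_elim (simp add: algebra_simps)
qed (use assms in \<open>simp_all add: L2add_in_L2s L2smul_in_L2s\<close>)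

lemma L2smul_L2smul:
  assumes "F \<in> L2s m n"
  shows "L2smul m a (L2smul m b F) = L2smul m (a * b) F"
proof (rule L2s_eqI[of _ m n])
  fix I
  from AE_rep_L2smul[OF assms, of "a * b" I] AE_rep_L2smul[OF assms, of b I]
    AE_rep_L2smul[OF L2smul_in_L2s[OF assms, of b], of a I]
  show "AE x in Rm m. rep (L2smul m a (L2smul m b F) I) x = rep (L2smul m (a * b) F I) x"
    by eventually_elim simp
qed (use assms in \<open>simp_all add: L2smul_in_L2s\<close>)

lemma L2smul_one:
  assumes "F \<in> L2s m n"
  shows "L2smul m 1 F = F"
proof (rule L2s_eqI[of _ m n])
  fix I
  from AE_rep_L2smul[OF assms, of 1 I]
  show "AE x in Rm m. rep (L2smul m 1 F I) x = rep (F I) x"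
    by eventually_elim simp
qed (use assms in \<open>simp_all add: L2smul_in_L2s\<close>)

lemma cvs_L2s: "cvs (L2s m n) (L2zero m) (L2add m) (L2smul m)"
  unfolding cvs_def
  by (intro conjI ballI allI;
      (rule L2zero_in_L2s L2add_in_L2s L2smul_in_L2s L2add_assoc L2add_commute L2add_L2zero_left
        L2add_L2smul_minus_one L2smul_L2add L2smul_add L2smul_L2smul L2smul_one; assumption)?)

lemma L2s_decompose:
  assumes F: "F \<in> L2s m n"
  shows "\<exists>A\<in>L2even m n. \<exists>B\<in>L2odd m n. F = L2add m A B"
proof -
  define A where "A I = (if even (card I) then F I else L2zero m I)" for I
  define B where "B I = (if odd (card I) then F I else L2zero m I)" for I
  have A: "A \<in> L2s m n" and B: "B \<in> L2s m n"
    using F by (auto simp: A_def B_def L2s_def L2zero_in_L2)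
  have "F = L2add m A B"
  proof (rule L2s_eqI[OF F L2add_in_L2s[OF A B]])
    fix I
    from AE_rep_L2add[OF A B, where I = I] AE_rep_L2zero[of m I]
    show "AE x in Rm m. rep (F I) x = rep (L2add m A B I) x"
      by eventually_elim (simp add: A_def B_def)
  qed
  moreover have "A \<in> L2even m n" "B \<in> L2odd m n"
    using A B by (simp_all add: L2even_def L2odd_def A_def B_def)
  ultimately show ?thesis
    by blast
qed

lemma graded_cvs_L2s: "graded_cvs (L2s m n) (L2even m n) (L2odd m n) (L2zero m) (L2add m) (L2smul m)"
proof -
  have "L2even m n \<inter> L2odd m n = {L2zero m}"
  proof (intro equalityI subsetI)
    fix F
    assume "F \<in> L2even m n \<inter> L2odd m n"
    then have "F I = L2zero m I" for I
      by (cases "even (card I)") (auto simp: L2even_def L2odd_def)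
    then show "F \<in> {L2zero m}"
      by auto
  qed (simp add: L2even_def L2odd_def L2zero_in_L2s)
  then show ?thesis
    unfolding graded_cvs_def subspace_of_def L2even_def L2odd_def
    using cvs_L2s L2s_decompose[of _ m n]
    by (auto simp: L2zero_in_L2s L2add_in_L2s L2smul_in_L2s L2add_eq_L2zero L2smul_eq_L2zero
        L2even_def L2odd_def)
qed

section \<open>The inner product\<close>

lemma eps_swap:
  assumes "finite I" "finite K" "I \<inter> K = {}"
  shows "eps I K = (-1) ^ (card I * card K) * eps K I"
proof -
  define A where "A = {(i, j). i \<in> I \<and> j \<in> K \<and> j < i}"
  define B where "B = {(i, j). i \<in> I \<and> j \<in> K \<and> i < j}"
  have "finite A" "finite B"
    using assms by (auto intro: finite_subset[of _ "I \<times> K"] simp: A_def B_def)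
  moreover have "A \<union> B = I \<times> K" "A \<inter> B = {}"
    using assms(3) by (auto simp: A_def B_def linorder_neq_iff)
  ultimately have "card A + card B = card I * card K"
    by (metis card_Un_disjoint card_cartesian_product)
  moreover have "card {(i, j). i \<in> K \<and> j \<in> I \<and> j < i} = card B"
  proof -
    have "{(i, j). i \<in> K \<and> j \<in> I \<and> j < i} = prod.swap ` B"
      by (auto simp: B_def)
    then show ?thesis
      by (simp add: card_image)
  qed
  ultimately have card_eq: "card I * card K + card {(i, j). i \<in> K \<and> j \<in> I \<and> j < i} = card A + 2 * card B"
    by simp
  have "(-1::int) ^ (card I * card K) * (-1) ^ card {(i, j). i \<in> K \<and> j \<in> I \<and> j < i}
      = (-1) ^ (card A + 2 * card B)"
    by (simp only: power_add[symmetric] card_eq)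
  also have "\<dots> = (-1) ^ card A"
    by (simp add: power_add power_mult)
  finally have "(-1::int) ^ card A = (-1) ^ (card I * card K) * (-1) ^ card {(i, j). i \<in> K \<and> j \<in> I \<and> j < i}"
    by simp
  with assms(3) show ?thesis
    unfolding eps_def A_def by (auto simp: Int_commute)
qed

lemma eps_mult_self: "I \<inter> K = {} \<Longrightarrow> eps I K * eps I K = 1"
  unfolding eps_def by (simp add: power_add[symmetric] flip: mult_2)

lemma card_Diff_atLeastAtMost: "I \<subseteq> {1..n} \<Longrightarrow> card ({1..n} - I) = n - card I"
  by (simp add: card_Diff_subset finite_subset)

lemma sum_Pow_Diff_reindex: "(\<Sum>I\<in>Pow {1..n}. f I) = (\<Sum>I\<in>Pow {1..n}. f ({1..n} - I))"
  by (rule sum.reindex_bij_witness[where i = "\<lambda>I. {1..n} - I" and j = "\<lambda>I. {1..n} - I"])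
     (auto simp: Diff_Diff_Int Int_absorb1)

text \<open>In the Berezin integral of a product, the coefficient \<open>I\<close> of the first factor only meets
  the coefficient \<open>\<complement>I\<close> of the second, since \<open>\<epsilon>\<close> vanishes on overlapping pairs.\<close>

lemma sum_Pow_union_top:
  assumes "I \<subseteq> {1..n}"
  shows "(\<Sum>I'\<in>Pow {1..n}. if I \<union> I' = {1..n} then of_int (eps I I') * (a::complex) * b I' else 0)
       = of_int (eps I ({1..n} - I)) * a * b ({1..n} - I)"
proof -
  have "(\<Sum>I'\<in>Pow {1..n}. if I \<union> I' = {1..n} then of_int (eps I I') * a * b I' else 0)
      = (\<Sum>I'\<in>Pow {1..n}. if I' = {1..n} - I then of_int (eps I ({1..n} - I)) * a * b ({1..n} - I) else 0)"
  proof (rule sum.cong[OF refl])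
    fix I'
    assume "I' \<in> Pow {1..n}"
    then have "I \<union> I' = {1..n} \<Longrightarrow> I' \<noteq> {1..n} - I \<Longrightarrow> I \<inter> I' \<noteq> {}"
      by auto
    then show "(if I \<union> I' = {1..n} then of_int (eps I I') * a * b I' else 0)
      = (if I' = {1..n} - I then of_int (eps I ({1..n} - I)) * a * b ({1..n} - I) else 0)"
      using assms by (auto simp: eps_def)
  qed
  then show ?thesis
    by (simp add: sum.delta')
qed

lemma L2ip_eq_sum:
  assumes F: "F \<in> L2s m n" and G: "G \<in> L2s m n"
  shows "L2ip m n F G
    = (\<Sum>I\<in>Pow {1..n}. of_int (eps I ({1..n} - I)) * L2inner m (rep (F I)) (rep (G ({1..n} - I))))"
proof -
  have "L2ip m n F G = (\<integral>x. (\<Sum>I\<in>Pow {1..n}. of_int (eps I ({1..n} - I)) *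
          (cnj (rep (F I) x) * rep (G ({1..n} - I)) x)) \<partial>Rm m)"
    unfolding L2ip_def berezin_def gmult_def sconj_def
    by (intro Bochner_Integration.integral_cong refl sum.cong, subst sum_Pow_union_top)
       (auto simp: mult.assoc)
  also have "\<dots> = (\<Sum>I\<in>Pow {1..n}. \<integral>x. of_int (eps I ({1..n} - I)) *
          (cnj (rep (F I) x) * rep (G ({1..n} - I)) x) \<partial>Rm m)"
    by (intro Bochner_Integration.integral_sum integrable_mult_right integrable_cnj_mult_sqint
        sqint_rep_L2s[OF F] sqint_rep_L2s[OF G])
  finally show ?thesis
    by (simp add: L2inner_def)
qed

lemma L2inner_L2add_left:
  assumes "F \<in> L2s m n" "G \<in> L2s m n" "H \<in> L2s m n"
  shows "L2inner m (rep (L2add m F G I)) (rep (H K))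
    = L2inner m (rep (F I)) (rep (H K)) + L2inner m (rep (G I)) (rep (H K))"
proof -
  have "L2inner m (rep (L2add m F G I)) (rep (H K)) = L2inner m (\<lambda>x. rep (F I) x + rep (G I) x) (rep (H K))"
    using assms by (intro L2inner_cong AE_rep_L2add sqint_add sqint_rep_L2s L2add_in_L2s) auto
  with assms show ?thesis
    by (simp add: L2inner_add_left sqint_rep_L2s)
qed

lemma L2inner_L2add_right:
  assumes "F \<in> L2s m n" "G \<in> L2s m n" "H \<in> L2s m n"
  shows "L2inner m (rep (H K)) (rep (L2add m F G I))
    = L2inner m (rep (H K)) (rep (F I)) + L2inner m (rep (H K)) (rep (G I))"
proof -
  have "L2inner m (rep (H K)) (rep (L2add m F G I)) = L2inner m (rep (H K)) (\<lambda>x. rep (F I) x + rep (G I) x)"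
    using assms by (intro L2inner_cong AE_rep_L2add sqint_add sqint_rep_L2s L2add_in_L2s) auto
  with assms show ?thesis
    by (simp add: L2inner_add_right sqint_rep_L2s)
qed

lemma L2inner_L2smul_left:
  assumes "F \<in> L2s m n" "H \<in> L2s m n"
  shows "L2inner m (rep (L2smul m c F I)) (rep (H K)) = cnj c * L2inner m (rep (F I)) (rep (H K))"
proof -
  have "L2inner m (rep (L2smul m c F I)) (rep (H K)) = L2inner m (\<lambda>x. c * rep (F I) x) (rep (H K))"
    using assms by (intro L2inner_cong AE_rep_L2smul sqint_cmult sqint_rep_L2s L2smul_in_L2s) auto
  then show ?thesis
    by (simp add: L2inner_cmult_left)
qed

lemma L2inner_L2smul_right:
  assumes "F \<in> L2s m n" "H \<in> L2s m n"
  shows "L2inner m (rep (H K)) (rep (L2smul m c F I)) = c * L2inner m (rep (H K)) (rep (F I))"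
proof -
  have "L2inner m (rep (H K)) (rep (L2smul m c F I)) = L2inner m (rep (H K)) (\<lambda>x. c * rep (F I) x)"
    using assms by (intro L2inner_cong AE_rep_L2smul sqint_cmult sqint_rep_L2s L2smul_in_L2s) auto
  then show ?thesis
    by (simp add: L2inner_cmult_right)
qed

lemma sesquilinear_L2ip: "sesquilinear (L2s m n) (L2add m) (L2smul m) (L2ip m n)"
  unfolding sesquilinear_def
  by (auto simp: L2ip_eq_sum L2add_in_L2s L2smul_in_L2s L2inner_L2add_left L2inner_L2add_right
      L2inner_L2smul_left L2inner_L2smul_right sum.distrib sum_distrib_left algebra_simps)

lemma homogeneous_in_L2s: "F \<in> L2even m n \<union> L2odd m n \<Longrightarrow> F \<in> L2s m n"
  by (auto simp: L2even_def L2odd_def)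

lemma homogeneous_coeff_eq_L2zero:
  "F \<in> L2even m n \<union> L2odd m n \<Longrightarrow> odd (card I + deg (L2even m n) F) \<Longrightarrow> F I = L2zero m I"
  by (auto simp: deg_def L2even_def L2odd_def split: if_splits)

lemma AE_rep_homogeneous_coeff:
  "F \<in> L2even m n \<union> L2odd m n \<Longrightarrow> odd (card I + deg (L2even m n) F) \<Longrightarrow>
    AE x in Rm m. rep (F I) x = 0"
  using homogeneous_coeff_eq_L2zero AE_rep_L2zero by metis

lemma L2ip_homogeneous_parity:
  assumes F: "F \<in> L2even m n \<union> L2odd m n" and G: "G \<in> L2even m n \<union> L2odd m n"
    and "L2ip m n F G \<noteq> 0"
  shows "(deg (L2even m n) F + deg (L2even m n) G) mod 2 = n mod 2"
proof (rule ccontr)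
  assume parity: "\<not> ?thesis"
  have vanish: "of_int (eps I ({1..n} - I)) * L2inner m (rep (F I)) (rep (G ({1..n} - I))) = 0"
    if "I \<subseteq> {1..n}" for I
  proof (cases "odd (card I + deg (L2even m n) F)")
    case True
    then show ?thesis
      using AE_rep_homogeneous_coeff[OF F] L2inner_eq_0_left by simp
  next
    case False
    have "card I \<le> n"
      using card_mono[OF _ that] by simp
    have "odd (n - c + d)" if "\<not> odd (c + a)" "(a + d) mod 2 \<noteq> n mod 2" "c \<le> n" for a c d :: nat
      using that by presburger
    with False parity \<open>card I \<le> n\<close> have "odd (card ({1..n} - I) + deg (L2even m n) G)"
      unfolding card_Diff_atLeastAtMost[OF that] by blast
    then show ?thesis
      using AE_rep_homogeneous_coeff[OF G] L2inner_eq_0_right by simp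
  qed
  have "L2ip m n F G = 0"
    unfolding L2ip_eq_sum[OF homogeneous_in_L2s[OF F] homogeneous_in_L2s[OF G]]
    using vanish by (intro sum.neutral) auto
  with assms(3) show False
    by contradiction
qed

lemma L2ip_superhermitian:
  assumes F: "F \<in> L2even m n \<union> L2odd m n" and G: "G \<in> L2even m n \<union> L2odd m n"
  shows "cnj (L2ip m n F G) = (-1) ^ (deg (L2even m n) F * deg (L2even m n) G) * L2ip m n G F"
proof -
  let ?U = "{1..n}" and ?dF = "deg (L2even m n) F" and ?dG = "deg (L2even m n) G"
  have coeff_swap: "of_int (eps I (?U - I)) * L2inner m (rep (G (?U - I))) (rep (F I))
      = (-1) ^ (?dF * ?dG) * (of_int (eps (?U - I) I) * L2inner m (rep (G (?U - I))) (rep (F I)))"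
    if I: "I \<subseteq> ?U" for I
  proof (cases "odd (card I + ?dF) \<or> odd (card (?U - I) + ?dG)")
    case True
    then have "L2inner m (rep (G (?U - I))) (rep (F I)) = 0"
      using AE_rep_homogeneous_coeff[OF F, of I] AE_rep_homogeneous_coeff[OF G, of "?U - I"]
        L2inner_eq_0_left L2inner_eq_0_right by blast
    then show ?thesis
      by simp
  next
    case False
    have "eps I (?U - I) = (-1) ^ (card I * card (?U - I)) * eps (?U - I) I"
      using I by (intro eps_swap) (auto intro: finite_subset)
    moreover have "((-1)::int) ^ (card I * card (?U - I)) = (-1) ^ (?dF * ?dG)"
      using False by (simp add: minus_one_power_iff even_mult_iff)
    ultimately show ?thesis
      by simp
  qed
  have "cnj (L2ip m n F G)
      = (\<Sum>I\<in>Pow ?U. of_int (eps I (?U - I)) * L2inner m (rep (G (?U - I))) (rep (F I)))"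
    unfolding L2ip_eq_sum[OF homogeneous_in_L2s[OF F] homogeneous_in_L2s[OF G]]
    by (simp add: cnj_L2inner)
  also have "\<dots> = (-1) ^ (?dF * ?dG)
      * (\<Sum>I\<in>Pow ?U. of_int (eps (?U - I) I) * L2inner m (rep (G (?U - I))) (rep (F I)))"
    unfolding sum_distrib_left by (rule sum.cong[OF refl], rule coeff_swap) auto
  also have "(\<Sum>I\<in>Pow ?U. of_int (eps (?U - I) I) * L2inner m (rep (G (?U - I))) (rep (F I)))
      = L2ip m n G F"
    unfolding L2ip_eq_sum[OF homogeneous_in_L2s[OF G] homogeneous_in_L2s[OF F]]
    by (subst sum_Pow_Diff_reindex) (auto intro: sum.cong simp: double_diff)
  finally show ?thesis .
qed

section \<open>The fundamental symmetry\<close>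

lemma L2J_in_L2s: "F \<in> L2s m n \<Longrightarrow> L2J m n F \<in> L2s m n"
  unfolding L2J_def L2s_def
  by (auto intro!: L2cls_in_L2 sqint_cmult sqint_rep simp: L2s_coeff_in_L2[of F m n, unfolded L2s_def])

lemma AE_rep_L2J:
  "F \<in> L2s m n \<Longrightarrow> K \<subseteq> {1..n} \<Longrightarrow>
    AE x in Rm m. rep (L2J m n F K) x = of_int (eps ({1..n} - K) K) * rep (F ({1..n} - K)) x"
  unfolding L2J_def by (simp add: AE_rep_L2cls[OF sqint_cmult[OF sqint_rep_L2s]])

lemma L2J_L2add:
  assumes "F \<in> L2s m n" "G \<in> L2s m n"
  shows "L2J m n (L2add m F G) = L2add m (L2J m n F) (L2J m n G)"
proof (rule L2s_eqI[of _ m n])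
  fix K
  assume K: "K \<subseteq> {1..n}"
  from AE_rep_L2J[OF L2add_in_L2s[OF assms] K] AE_rep_L2add[OF assms, of "{1..n} - K"]
    AE_rep_L2add[OF L2J_in_L2s[OF assms(1)] L2J_in_L2s[OF assms(2)], of K]
    AE_rep_L2J[OF assms(1) K] AE_rep_L2J[OF assms(2) K]
  show "AE x in Rm m. rep (L2J m n (L2add m F G) K) x = rep (L2add m (L2J m n F) (L2J m n G) K) x"
    by eventually_elim (simp add: algebra_simps)
qed (use assms in \<open>simp_all add: L2J_in_L2s L2add_in_L2s\<close>)

lemma L2J_L2smul:
  assumes "F \<in> L2s m n"
  shows "L2J m n (L2smul m c F) = L2smul m c (L2J m n F)"
proof (rule L2s_eqI[of _ m n])
  fix K
  assume K: "K \<subseteq> {1..n}"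
  from AE_rep_L2J[OF L2smul_in_L2s[OF assms, of c] K] AE_rep_L2smul[OF assms, of c "{1..n} - K"]
    AE_rep_L2smul[OF L2J_in_L2s[OF assms], of c K] AE_rep_L2J[OF assms K]
  show "AE x in Rm m. rep (L2J m n (L2smul m c F) K) x = rep (L2smul m c (L2J m n F) K) x"
    by eventually_elim (simp add: algebra_simps)
qed (use assms in \<open>simp_all add: L2J_in_L2s L2smul_in_L2s\<close>)

lemma hpart_L2even_L2odd:
  "hpart (L2even m n) (L2odd m n) d = {F \<in> L2s m n. \<forall>I. odd (card I + d) \<longrightarrow> F I = L2zero m I}"
  unfolding hpart_def L2even_def L2odd_def by auto

lemma L2J_hpart:
  assumes "F \<in> hpart (L2even m n) (L2odd m n) d"
  shows "L2J m n F \<in> hpart (L2even m n) (L2odd m n) (d + n)"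
proof -
  have F: "F \<in> L2s m n" and F_zero: "\<And>I. odd (card I + d) \<Longrightarrow> F I = L2zero m I"
    using assms by (auto simp: hpart_L2even_L2odd)
  have "L2J m n F K = L2zero m K" if K: "odd (card K + (d + n))" for K
  proof (cases "K \<subseteq> {1..n}")
    case True
    have "card K \<le> n"
      using card_mono[OF _ True] by simp
    with K have "odd (card ({1..n} - K) + d)"
      unfolding card_Diff_atLeastAtMost[OF True] by presburger
    then have "AE x in Rm m. of_int (eps ({1..n} - K) K) * rep (F ({1..n} - K)) x = 0"
      using AE_rep_L2zero[of m "{1..n} - K"] by (auto simp: F_zero elim: AE_mp)
    with True show ?thesis
      unfolding L2J_def L2zero_def by (simp add: L2cls_cong)
  qed (simp add: L2J_def)
  with L2J_in_L2s[OF F] show ?thesis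
    by (simp add: hpart_L2even_L2odd)
qed

lemma L2J_L2J:
  assumes homogeneous: "F \<in> L2even m n \<union> L2odd m n"
  shows "L2J m n (L2J m n F) = L2smul m ((-1) ^ ((n + 1) * deg (L2even m n) F)) F"
proof (rule L2s_eqI[of _ m n])
  let ?U = "{1..n}" and ?d = "deg (L2even m n) F"
  have F: "F \<in> L2s m n"
    by (rule homogeneous_in_L2s[OF homogeneous])
  show "L2J m n (L2J m n F) \<in> L2s m n" "L2smul m ((-1) ^ ((n + 1) * ?d)) F \<in> L2s m n"
    by (simp_all add: F L2J_in_L2s L2smul_in_L2s)
  fix K
  assume K: "K \<subseteq> ?U"
  have CK: "?U - K \<subseteq> ?U" and CCK: "?U - (?U - K) = K"
    using K by auto
  show "AE x in Rm m. rep (L2J m n (L2J m n F) K) x = rep (L2smul m ((-1) ^ ((n + 1) * ?d)) F K) x"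
  proof (cases "odd (card K + ?d)")
    case True
    from AE_rep_L2J[OF L2J_in_L2s[OF F] K] AE_rep_L2J[OF F CK]
      AE_rep_homogeneous_coeff[OF homogeneous True] AE_rep_L2smul[OF F, of "(-1) ^ ((n + 1) * ?d)" K]
    show ?thesis
      unfolding CCK by eventually_elim simp
  next
    case False
    have "card K \<le> n"
      using card_mono[OF _ K] by simp
    have "eps (?U - K) K * eps K (?U - K) = (-1) ^ (card (?U - K) * card K) * (eps K (?U - K) * eps K (?U - K))"
      using K by (subst eps_swap) (auto intro: finite_subset)
    also have "\<dots> = (-1) ^ ((n + 1) * ?d)"
      unfolding card_Diff_atLeastAtMost[OF K] using False \<open>card K \<le> n\<close>
      by (simp add: eps_mult_self minus_one_power_iff even_mult_iff)
    finally have "complex_of_int (eps (?U - K) K * eps K (?U - K)) = of_int ((-1) ^ ((n + 1) * ?d))"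
      by (rule arg_cong)
    then have sign: "complex_of_int (eps (?U - K) K) * complex_of_int (eps K (?U - K)) = (-1) ^ ((n + 1) * ?d)"
      by simp
    from AE_rep_L2J[OF L2J_in_L2s[OF F] K] AE_rep_L2J[OF F CK]
      AE_rep_L2smul[OF F, of "(-1) ^ ((n + 1) * ?d)" K]
    show ?thesis
      unfolding CCK by eventually_elim (simp only: sign mult.assoc[symmetric])
  qed
qed

lemma L2inner_L2J_left:
  assumes "F \<in> L2s m n" "G \<in> L2s m n" "K \<subseteq> {1..n}"
  shows "L2inner m (rep (L2J m n F K)) (rep (G I))
    = of_int (eps ({1..n} - K) K) * L2inner m (rep (F ({1..n} - K))) (rep (G I))"
proof -
  have "L2inner m (rep (L2J m n F K)) (rep (G I))
      = L2inner m (\<lambda>x. of_int (eps ({1..n} - K) K) * rep (F ({1..n} - K)) x) (rep (G I))"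
    using assms by (intro L2inner_cong AE_rep_L2J sqint_cmult sqint_rep_L2s[OF L2J_in_L2s[OF assms(1)]]
        sqint_rep_L2s[OF assms(1)] sqint_rep_L2s[OF assms(2)]) auto
  then show ?thesis
    by (simp add: L2inner_cmult_left)
qed

lemma L2inner_L2J_right:
  assumes "F \<in> L2s m n" "G \<in> L2s m n" "K \<subseteq> {1..n}"
  shows "L2inner m (rep (F I)) (rep (L2J m n G K))
    = of_int (eps ({1..n} - K) K) * L2inner m (rep (F I)) (rep (G ({1..n} - K)))"
proof -
  have "L2inner m (rep (F I)) (rep (L2J m n G K))
      = L2inner m (rep (F I)) (\<lambda>x. of_int (eps ({1..n} - K) K) * rep (G ({1..n} - K)) x)"
    using assms by (intro L2inner_cong AE_rep_L2J sqint_cmult sqint_rep_L2s[OF L2J_in_L2s[OF assms(2)]]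
        sqint_rep_L2s[OF assms(1)] sqint_rep_L2s[OF assms(2)]) auto
  then show ?thesis
    by (simp add: L2inner_cmult_right)
qed

lemma of_int_eps_mult_self: "I \<inter> K = {} \<Longrightarrow> complex_of_int (eps I K) * complex_of_int (eps I K) = 1"
  by (metis eps_mult_self of_int_1 of_int_mult)

lemma L2ip_L2J_right:
  assumes "F \<in> L2s m n" "G \<in> L2s m n"
  shows "L2ip m n F (L2J m n G) = (\<Sum>I\<in>Pow {1..n}. L2inner m (rep (F I)) (rep (G I)))"
  unfolding L2ip_eq_sum[OF assms(1) L2J_in_L2s[OF assms(2)]]
proof (rule sum.cong[OF refl])
  fix I
  assume "I \<in> Pow {1..n}"
  then have "{1..n} - ({1..n} - I) = I"
    by auto
  then have "of_int (eps I ({1..n} - I)) * L2inner m (rep (F I)) (rep (L2J m n G ({1..n} - I)))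
      = (of_int (eps I ({1..n} - I)) * of_int (eps I ({1..n} - I))) * L2inner m (rep (F I)) (rep (G I))"
    by (simp only: L2inner_L2J_right[OF assms Diff_subset] mult.assoc)
  then show "of_int (eps I ({1..n} - I)) * L2inner m (rep (F I)) (rep (L2J m n G ({1..n} - I)))
      = L2inner m (rep (F I)) (rep (G I))"
    by (simp only: of_int_eps_mult_self[OF Diff_disjoint] mult_1)
qed

lemma L2ip_L2J_L2J:
  assumes F: "F \<in> L2s m n" and G: "G \<in> L2s m n"
  shows "L2ip m n (L2J m n F) (L2J m n G) = L2ip m n F G"
proof -
  let ?U = "{1..n}"
  have "L2ip m n (L2J m n F) (L2J m n G)
      = (\<Sum>I\<in>Pow ?U. of_int (eps (?U - I) I) * L2inner m (rep (F (?U - I))) (rep (G I)))"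
    unfolding L2ip_eq_sum[OF L2J_in_L2s[OF F] L2J_in_L2s[OF G]]
  proof (rule sum.cong[OF refl])
    fix I
    assume "I \<in> Pow ?U"
    then have I: "I \<subseteq> ?U" and CCI: "?U - (?U - I) = I"
      by auto
    have "of_int (eps I (?U - I)) * L2inner m (rep (L2J m n F I)) (rep (L2J m n G (?U - I)))
        = (of_int (eps I (?U - I)) * of_int (eps I (?U - I)))
          * (of_int (eps (?U - I) I) * L2inner m (rep (F (?U - I))) (rep (G I)))"
      by (simp only: L2inner_L2J_left[OF F L2J_in_L2s[OF G] I] L2inner_L2J_right[OF F G Diff_subset]
          CCI mult.assoc mult.left_commute)
    then show "of_int (eps I (?U - I)) * L2inner m (rep (L2J m n F I)) (rep (L2J m n G (?U - I)))
        = of_int (eps (?U - I) I) * L2inner m (rep (F (?U - I))) (rep (G I))"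
      by (simp only: of_int_eps_mult_self[OF Diff_disjoint] mult_1)
  qed
  also have "\<dots> = L2ip m n F G"
    unfolding L2ip_eq_sum[OF F G]
    by (subst sum_Pow_Diff_reindex) (auto intro: sum.cong simp: double_diff)
  finally show ?thesis .
qed

lemma cnj_L2ip_L2J:
  "F \<in> L2s m n \<Longrightarrow> G \<in> L2s m n \<Longrightarrow> cnj (L2ip m n F (L2J m n G)) = L2ip m n G (L2J m n F)"
  by (simp add: L2ip_L2J_right cnj_L2inner)

lemma L2ip_L2J_self:
  "F \<in> L2s m n \<Longrightarrow> L2ip m n F (L2J m n F) = of_real (\<Sum>I\<in>Pow {1..n}. L2sqnorm m (rep (F I)))"
  by (simp add: L2ip_L2J_right L2inner_self)

lemma L2ip_L2J_self_eq_0_iff: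
  assumes F: "F \<in> L2s m n"
  shows "L2ip m n F (L2J m n F) = 0 \<longleftrightarrow> F = L2zero m"
proof
  assume "L2ip m n F (L2J m n F) = 0"
  then have "(\<Sum>I\<in>Pow {1..n}. L2sqnorm m (rep (F I))) = 0"
    by (simp only: L2ip_L2J_self[OF F] of_real_eq_0_iff)
  then have "\<forall>I\<in>Pow {1..n}. L2sqnorm m (rep (F I)) = 0"
    by (simp add: sum_nonneg_eq_0_iff L2sqnorm_nonneg)
  then have coeff: "F I = L2zero m I" if "I \<subseteq> {1..n}" for I
    using that by (auto intro!: L2s_coeff_eq_L2zeroI[OF F] simp: L2sqnorm_eq_0_iff sqint_rep_L2s[OF F])
  show "F = L2zero m"
  proof
    fix I
    show "F I = L2zero m I"
      using F coeff by (cases "I \<subseteq> {1..n}") (auto simp: L2s_def)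
  qed
next
  assume "F = L2zero m"
  moreover have "L2sqnorm m (rep (L2zero m I)) = 0" for I
    using L2sqnorm_eq_0_iff[OF sqint_rep[OF L2zero_in_L2]] AE_rep_L2zero by blast
  ultimately show "L2ip m n F (L2J m n F) = 0"
    by (simp add: L2ip_L2J_self L2zero_in_L2s)
qed

definition L2Jdist :: "nat \<Rightarrow> nat \<Rightarrow> L2super \<Rightarrow> L2super \<Rightarrow> real" where
  "L2Jdist m n F G = sqrt (Re (L2ip m n (L2add m F (L2smul m (-1) G)) (L2J m n (L2add m F (L2smul m (-1) G)))))"

lemma L2Jdist_eq:
  assumes F: "F \<in> L2s m n" and G: "G \<in> L2s m n"
  shows "L2Jdist m n F G = sqrt (\<Sum>I\<in>Pow {1..n}. L2sqnorm m (\<lambda>x. rep (F I) x - rep (G I) x))"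
proof -
  have D: "L2add m F (L2smul m (-1) G) \<in> L2s m n"
    by (intro L2add_in_L2s L2smul_in_L2s F G)
  have "L2sqnorm m (rep (L2add m F (L2smul m (-1) G) I)) = L2sqnorm m (\<lambda>x. rep (F I) x - rep (G I) x)" for I
  proof (rule L2sqnorm_cong[OF sqint_rep_L2s[OF D] sqint_diff[OF sqint_rep_L2s[OF F] sqint_rep_L2s[OF G]]])
    from AE_rep_L2add[OF F L2smul_in_L2s[OF G, of "-1"], of I] AE_rep_L2smul[OF G, of "-1" I]
    show "AE x in Rm m. rep (L2add m F (L2smul m (-1) G) I) x = rep (F I) x - rep (G I) x"
      by eventually_elim simp
  qed
  then show ?thesis
    by (simp add: L2Jdist_def L2ip_L2J_self[OF D])
qed

lemma sqrt_L2sqnorm_coeff_diff_le_L2Jdist: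
  assumes "F \<in> L2s m n" "G \<in> L2s m n" "I \<subseteq> {1..n}"
  shows "sqrt (L2sqnorm m (\<lambda>x. rep (F I) x - rep (G I) x)) \<le> L2Jdist m n F G"
proof -
  have "L2sqnorm m (\<lambda>x. rep (F I) x - rep (G I) x)
      \<le> (\<Sum>K\<in>Pow {1..n}. L2sqnorm m (\<lambda>x. rep (F K) x - rep (G K) x))"
    using assms(3) by (intro member_le_sum) (auto simp: L2sqnorm_nonneg)
  then show ?thesis
    by (simp add: L2Jdist_eq[OF assms(1,2)])
qed

lemma L2s_complete:
  assumes s: "\<And>k. s k \<in> L2s m n"
    and Cauchy: "\<And>e. e > 0 \<Longrightarrow> \<exists>N. \<forall>i j. i \<ge> N \<longrightarrow> j \<ge> N \<longrightarrow> L2Jdist m n (s i) (s j) < e"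
  shows "\<exists>l\<in>L2s m n. (\<lambda>k. L2Jdist m n (s k) l) \<longlonglongrightarrow> 0"
proof -
  let ?U = "{1..n}"
  have "\<exists>f. sqint m f \<and> (\<lambda>k. L2sqnorm m (\<lambda>x. rep (s k I) x - f x)) \<longlonglongrightarrow> 0" if I: "I \<in> Pow ?U" for I
  proof (rule L2_Riesz_Fischer)
    show "sqint m (rep (s k I))" for k
      by (rule sqint_rep_L2s[OF s])
    fix e :: real
    assume "e > 0"
    then obtain N where N: "\<And>i j. i \<ge> N \<Longrightarrow> j \<ge> N \<Longrightarrow> L2Jdist m n (s i) (s j) < sqrt e"
      using Cauchy[of "sqrt e"] by auto
    have "L2sqnorm m (\<lambda>x. rep (s i I) x - rep (s j I) x) < e" if "i \<ge> N" "j \<ge> N" for i j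
    proof -
      have "sqrt (L2sqnorm m (\<lambda>x. rep (s i I) x - rep (s j I) x)) < sqrt e"
        using sqrt_L2sqnorm_coeff_diff_le_L2Jdist[OF s s I[unfolded Pow_iff]] N[OF that]
        by (rule order.strict_trans1)
      then show ?thesis
        by simp
    qed
    then show "\<exists>N. \<forall>i j. i \<ge> N \<longrightarrow> j \<ge> N \<longrightarrow> L2sqnorm m (\<lambda>x. rep (s i I) x - rep (s j I) x) < e"
      by blast
  qed blast
  then have "\<forall>I\<in>Pow ?U. \<exists>f. sqint m f \<and> (\<lambda>k. L2sqnorm m (\<lambda>x. rep (s k I) x - f x)) \<longlonglongrightarrow> 0"
    by blast
  then obtain f where f: "\<forall>I\<in>Pow ?U. sqint m (f I) \<and> (\<lambda>k. L2sqnorm m (\<lambda>x. rep (s k I) x - f I x)) \<longlonglongrightarrow> 0"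
    by (rule bchoice[elim_format]) blast
  define l where "l I = (if I \<subseteq> ?U then L2cls m (f I) else L2zero m I)" for I
  have l: "l \<in> L2s m n"
    using f by (auto simp: L2s_def l_def L2cls_in_L2)
  have "L2sqnorm m (\<lambda>x. rep (s k I) x - rep (l I) x) = L2sqnorm m (\<lambda>x. rep (s k I) x - f I x)"
    if I: "I \<in> Pow ?U" for I k
  proof (rule L2sqnorm_cong)
    have fI: "sqint m (f I)"
      using f I by blast
    show "sqint m (\<lambda>x. rep (s k I) x - rep (l I) x)" "sqint m (\<lambda>x. rep (s k I) x - f I x)"
      using sqint_rep_L2s[OF s] sqint_rep_L2s[OF l] fI by (auto intro!: sqint_diff)
    show "AE x in Rm m. rep (s k I) x - rep (l I) x = rep (s k I) x - f I x"
      using AE_rep_L2cls[OF fI] I by (auto simp: l_def elim: AE_mp)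
  qed
  then have "L2Jdist m n (s k) l = sqrt (\<Sum>I\<in>Pow ?U. L2sqnorm m (\<lambda>x. rep (s k I) x - f I x))" for k
    by (simp add: L2Jdist_eq[OF s l])
  moreover have "(\<lambda>k. sqrt (\<Sum>I\<in>Pow ?U. L2sqnorm m (\<lambda>x. rep (s k I) x - f I x))) \<longlonglongrightarrow> sqrt 0"
    using f by (intro tendsto_real_sqrt tendsto_null_sum) auto
  ultimately have "(\<lambda>k. L2Jdist m n (s k) l) \<longlonglongrightarrow> 0"
    by simp
  with l show ?thesis
    by blast
qed

lemma fundamental_symmetry_L2J:
  "fundamental_symmetry (L2s m n) (L2even m n) (L2odd m n) (L2zero m) (L2add m) (L2smul m)
     (L2ip m n) n (L2J m n)"
  unfolding fundamental_symmetry_def L2Jdist_def[symmetric]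
proof (intro conjI ballI allI impI)
  fix F
  assume F: "F \<in> L2s m n"
  show "Im (L2ip m n F (L2J m n F)) = 0" "0 \<le> Re (L2ip m n F (L2J m n F))"
    by (simp_all add: L2ip_L2J_self[OF F] sum_nonneg L2sqnorm_nonneg)
  show "L2ip m n F (L2J m n F) = 0 \<Longrightarrow> F = L2zero m"
    using L2ip_L2J_self_eq_0_iff[OF F] by blast
qed (auto simp: L2J_in_L2s L2J_L2add L2J_L2smul L2J_hpart L2J_L2J L2ip_L2J_L2J homogeneous_in_L2s
    cnj_L2ip_L2J intro: L2s_complete)

theorem mainTheorem2:
  fixes m n :: nat
  shows "hilbert_superspace (L2s m n) (L2even m n) (L2odd m n) (L2zero m) (L2add m) (L2smul m)
           (L2ip m n) n
       \<and> fundamental_symmetry (L2s m n) (L2even m n) (L2odd m n) (L2zero m) (L2add m) (L2smul m)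
           (L2ip m n) n (L2J m n)"
proof -
  have J: "fundamental_symmetry (L2s m n) (L2even m n) (L2odd m n) (L2zero m) (L2add m) (L2smul m)
      (L2ip m n) n (L2J m n)"
    by (rule fundamental_symmetry_L2J)
  then have "hilbert_superspace (L2s m n) (L2even m n) (L2odd m n) (L2zero m) (L2add m) (L2smul m)
      (L2ip m n) n"
    unfolding hilbert_superspace_def
    using graded_cvs_L2s sesquilinear_L2ip L2ip_homogeneous_parity L2ip_superhermitian by blast
  with J show ?thesis
    by blast
qed

end
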